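(* Let $n\ge1$, $b\ge1$. For $0\le i,j\le n$: (1) the transition probabilities of the type $B$ base-$(2b+1)$ carries chain are $$P(i,j)=\frac1{(2b+1)^n}\sum_{l\ge0}(-1)^l\binom{n+1}{l}\binom{n+(j-l)(2b+1)+b-i}{n};$$ (2) its $r$-step transition probabilities ($r\ge1$) are $$P^r(i,j)=\frac1{(2b+1)^{rn}}\sum_{l\ge0}(-1)^l\binom{n+1}{l}\binom{n+(j-l)(2b+1)^r+\frac{(2b+1)^r-1}{2}-i}{n}.$$
   Context: Binomial convention: $\binom{m}{n}=\frac{m(m-1)\cdots(m-n+1)}{n!}$ if $m\ge n$ and $\binom{m}{n}=0$ if $m<n$ (including negative $m$). The type $B$ base-$(2b+1)$ carries chain (for $n$ summands) is the Markov chain $\kappa_0=0,\kappa_1,\dots$ on $\{0,1,\dots,n\}$ obtained by adding $n$ random base-$(2b+1)$ numbers with i.i.d. digits uniform on $\{0,1,\dots,2b\}$ together with the number all of whose digits equal $b$: $\kappa_{t+1}=\lfloor(\kappa_t+b+X_{t+1,1}+\dots+X_{t+1,n})/(2b+1)\rfloor$ with $X_{t,k}$ i.i.d. uniform on $\{0,\dots,2b\}$. *)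

theory Defs
  imports Complex_Main "HOL-Library.FuncSet"
begin

text \<open>Binomial with integer upper argument: m(m-1)...(m-k+1)/k! if m >= k, and 0 if m < k
  (including negative m).\<close>
definition binomz :: "int \<Rightarrow> nat \<Rightarrow> int" where
  "binomz m k = (if m < int k then 0 else int (nat m choose k))"

text \<open>One-step transition probability of the type B base-(2b+1) carries chain with n summands:
  the probability, for digits X_1..X_n i.i.d. uniform on {0..2b}, that
  floor((i + b + X_1 + ... + X_n)/(2b+1)) = j.\<close>
definition carriesB_P :: "nat \<Rightarrow> nat \<Rightarrow> nat \<Rightarrow> nat \<Rightarrow> real" where
  "carriesB_P b n i j =
     real (card {x \<in> {..<n} \<rightarrow>\<^sub>E {0..2*b}.
                   (i + b + (\<Sum>k<n. x k)) div (2*b+1) = j}) / real ((2*b+1)^n)"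

fun carriesB_Pr :: "nat \<Rightarrow> nat \<Rightarrow> nat \<Rightarrow> nat \<Rightarrow> nat \<Rightarrow> real" where
  "carriesB_Pr b n 0 i j = (if i = j then 1 else 0)"
| "carriesB_Pr b n (Suc r) i j = (\<Sum>k=0..n. carriesB_Pr b n r i k * carriesB_P b n k j)"

end

theory Submission
  imports Defs
begin

(* Everything reduces to counting digit vectors.  For an arbitrary base M and shift B,
   carry_count n M B i j counts the x in {0..<M}^n with (i + B + sum x) div M = j, so that
   P(i,j) = carry_count n (2b+1) b i j / (2b+1)^n.
   (a) Closed form.  The number of x in {0..<M}^n with sum x <= t is an alternating
       binomial sum (inclusion-exclusion, proved by induction on n via the hockey-stick
       identity).  A carry count is the difference of two such counts, and the alternating
       Pascal rule merges the difference into one sum with coefficients binom(n+1, l).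
   (b) Composition.  Writing a base-(M*m) digit as x + M*y with x < M, y < m shows that
       carrying with base M and shift B, then with base m and shift c, is carrying with
       base M*m and shift B + M*c (a Chapman-Kolmogorov identity for the counts).
       Iterating it, the r-step chain is the one-step chain of base (2b+1)^r with the
       centred shift ((2b+1)^r - 1)/2.
   The theorem is (a) applied to the one-step and to the r-step counts. *)

lemma binomz_pascal: "binomz (v + 1) (Suc k) = binomz v (Suc k) + binomz v k"
proof (cases "v < int k")
  case True
  then show ?thesis by (simp add: binomz_def)
next
  case False
  define w where "w = nat v"
  have v: "v = int w" "k \<le> w" using False by (auto simp: w_def)
  show ?thesis
  proof (cases "w = k")
    case True
    then show ?thesis using v by (simp add: binomz_def nat_add_distrib)
  next
    case False
    then show ?thesis using v by (simp add: binomz_def nat_add_distrib)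
  qed
qed

(* Hockey-stick identity: summing binomz over a run of N consecutive upper arguments
   telescopes by Pascal's rule. *)
lemma binomz_hockey_stick:
  "(\<Sum>a<N. binomz (u - int a) k) = binomz (u + 1) (Suc k) - binomz (u + 1 - int N) (Suc k)"
proof (induction N)
  case 0
  then show ?case by simp
next
  case (Suc N)
  have "binomz (u + 1 - int N) (Suc k) = binomz (u - int N) (Suc k) + binomz (u - int N) k"
    using binomz_pascal[of "u - int N" k] by (simp add: algebra_simps)
  then show ?case using Suc by simp
qed

(* This raises the coefficients from n to n+1 both in the
   induction on the number of digits and when a carry count is written as a difference. *)
lemma alternating_binomial_telescope:
  fixes g :: "nat \<Rightarrow> int"
  shows "(\<Sum>l=0..n. (-1)^l * int (n choose l) * (g l - g (Suc l)))
       = (\<Sum>l=0..Suc n. (-1)^l * int (Suc n choose l) * g l)"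
proof -
  have peel: "(\<Sum>l=0..n. (-1)^l * int (n choose l) * g l)
      = g 0 - (\<Sum>l=0..n. (-1)^l * int (n choose Suc l) * g (Suc l))"
  proof -
    have "(\<Sum>l=0..n. (-1)^l * int (n choose l) * g l)
        = (\<Sum>l=0..Suc n. (-1)^l * int (n choose l) * g l)"
      by (simp add: sum.atLeast0_atMost_Suc)
    also have "\<dots> = g 0 + (\<Sum>l=0..n. (-1)^(Suc l) * int (n choose Suc l) * g (Suc l))"
      by (subst sum.atLeast0_atMost_Suc_shift) simp
    finally show ?thesis by (simp add: sum_negf[symmetric])
  qed
  have "(\<Sum>l=0..Suc n. (-1)^l * int (Suc n choose l) * g l)
      = g 0 + (\<Sum>l=0..n. (-1)^(Suc l) * int (Suc n choose Suc l) * g (Suc l))"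
    by (subst sum.atLeast0_atMost_Suc_shift) simp
  also have "\<dots> = g 0 - (\<Sum>l=0..n. (-1)^l * int (n choose l) * g (Suc l))
                  - (\<Sum>l=0..n. (-1)^l * int (n choose Suc l) * g (Suc l))"
    by (simp add: sum_subtractf[symmetric] sum_negf[symmetric] algebra_simps sum.distrib[symmetric])
  finally show ?thesis
    using peel by (simp add: sum_subtractf algebra_simps)
qed

lemma card_filter_bij_betw:
  assumes "bij_betw f X Y"
  shows "card {y \<in> Y. Q y} = card {x \<in> X. Q (f x)}"
proof -
  have "f ` {x \<in> X. Q (f x)} = {y \<in> Y. Q y}"
    using bij_betw_imp_surj_on[OF assms] by blast
  then have "bij_betw f {x \<in> X. Q (f x)} {y \<in> Y. Q y}"
    by (rule bij_betw_subset[OF assms, rotated]) blast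
  then show ?thesis
    by (rule bij_betw_same_card[symmetric])
qed

abbreviation digit_vectors :: "nat \<Rightarrow> nat \<Rightarrow> (nat \<Rightarrow> nat) set" where
  "digit_vectors n M \<equiv> {..<n} \<rightarrow>\<^sub>E {0..<M}"

definition sum_le_count :: "nat \<Rightarrow> nat \<Rightarrow> int \<Rightarrow> nat" where
  "sum_le_count n M t = card {x \<in> digit_vectors n M. int (\<Sum>k<n. x k) \<le> t}"

(* Splitting off the last digit a gives the recursion in the number of digits. *)
lemma sum_le_count_Suc:
  "sum_le_count (Suc n) M t = (\<Sum>a<M. sum_le_count n M (t - int a))"
proof -
  let ?extend = "\<lambda>(a, g). g(n := a) :: nat \<Rightarrow> nat"
  let ?X = "{0..<M} \<times> digit_vectors n M"
  let ?Q = "\<lambda>x. int (\<Sum>k<Suc n. x k) \<le> t"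
  have split: "{p \<in> ?X. ?Q (?extend p)}
      = (SIGMA a:{0..<M}. {g \<in> digit_vectors n M. int (\<Sum>k<n. g k) \<le> t - int a})"
    (is "?L = ?R")
  proof (rule set_eqI)
    fix p :: "nat \<times> (nat \<Rightarrow> nat)"
    obtain a g where p: "p = (a, g)" by (cases p)
    have "(\<Sum>k<Suc n. (g(n := a)) k) = a + (\<Sum>k<n. g k)"
      by (simp add: sum.lessThan_Suc)
    then show "p \<in> ?L \<longleftrightarrow> p \<in> ?R"
      unfolding p by (simp add: le_diff_eq)
  qed
  have "bij_betw ?extend ?X (digit_vectors (Suc n) M)"
    unfolding lessThan_Suc by (intro bij_betw_imageI inj_combinator PiE_insert_eq[symmetric]) simp
  then have "sum_le_count (Suc n) M t = card {p \<in> ?X. ?Q (?extend p)}"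
    unfolding sum_le_count_def by (rule card_filter_bij_betw)
  also have "\<dots> = (\<Sum>a<M. sum_le_count n M (t - int a))"
    unfolding split by (simp add: sum_le_count_def finite_PiE atLeast0LessThan)
  finally show ?thesis .
qed

lemma sum_le_count_formula:
  "int (sum_le_count n M t)
     = (\<Sum>l=0..n. (-1)^l * int (n choose l) * binomz (t - int l * int M + int n) n)"
proof (induction n arbitrary: t)
  case 0
  then show ?case by (simp add: sum_le_count_def binomz_def)
next
  case (Suc n)
  define g where "g l = binomz (t - int l * int M + int (Suc n)) (Suc n)" for l
  have "int (sum_le_count (Suc n) M t) = (\<Sum>a<M. int (sum_le_count n M (t - int a)))"
    by (simp add: sum_le_count_Suc)
  also have "\<dots> = (\<Sum>l=0..n. (-1)^l * int (n choose l) *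
                     (\<Sum>a<M. binomz ((t - int l * int M + int n) - int a) n))"
    unfolding Suc.IH sum_distrib_left
    by (subst sum.swap) (simp add: algebra_simps)
  also have "\<dots> = (\<Sum>l=0..n. (-1)^l * int (n choose l) * (g l - g (Suc l)))"
    by (intro sum.cong refl) (subst binomz_hockey_stick, simp add: g_def algebra_simps)
  also have "\<dots> = (\<Sum>l=0..Suc n. (-1)^l * int (Suc n choose l) * g l)"
    by (rule alternating_binomial_telescope)
  finally show ?case by (simp add: g_def)
qed

(* Number of digit vectors that move the carry i to the carry j, when the summands are
   digits in base M and the extra summand contributes the digit B. *)
definition carry_count :: "nat \<Rightarrow> nat \<Rightarrow> nat \<Rightarrow> nat \<Rightarrow> nat \<Rightarrow> nat" where
  "carry_count n M B i j = card {x \<in> digit_vectors n M. (i + B + (\<Sum>k<n. x k)) div M = j}"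

(* The carry lands in j exactly when the digit sum lies in the window (t, t + M]. *)
lemma carry_count_as_difference:
  fixes n M B i j :: nat
  assumes "M > 0"
  defines "t \<equiv> int j * int M - 1 - int B - int i"
  shows "int (carry_count n M B i j) = int (sum_le_count n M (t + int M)) - int (sum_le_count n M t)"
proof -
  let ?le = "\<lambda>t. {x \<in> digit_vectors n M. int (\<Sum>k<n. x k) \<le> t}"
  have carry_iff: "(i + B + s) div M = j \<longleftrightarrow> int s \<le> t + int M \<and> \<not> int s \<le> t" for s
  proof -
    have "(i + B + s) div M = j \<longleftrightarrow> j * M \<le> i + B + s \<and> i + B + s < Suc j * M"
      using assms(1) by (meson div_less_iff_less_mult div_times_less_eq_dividend
          le_less_Suc_eq less_eq_div_iff_mult_less_eq)
    also have "\<dots> \<longleftrightarrow> int s \<le> t + int M \<and> \<not> int s \<le> t"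
      unfolding t_def mult_Suc by (simp only: of_nat_mult[symmetric]) linarith
    finally show ?thesis .
  qed
  have carries: "{x \<in> digit_vectors n M. (i + B + (\<Sum>k<n. x k)) div M = j} = ?le (t + int M) - ?le t"
    using carry_iff by blast
  have sub: "?le t \<subseteq> ?le (t + int M)"
    by (intro Collect_mono) auto
  have fin: "finite (?le (t + int M))"
    by (simp add: finite_PiE)
  have "card (?le (t + int M) - ?le t) = card (?le (t + int M)) - card (?le t)"
    using card_Diff_subset[OF finite_subset[OF sub fin] sub] .
  then show ?thesis
    unfolding carry_count_def sum_le_count_def carries using card_mono[OF fin sub] by simp
qed

lemma carry_count_formula:
  fixes n M B i j :: nat
  assumes "M > 0"
  shows "int (carry_count n M B i j)
     = (\<Sum>l=0..Suc n. (-1)^l * int (Suc n choose l) *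
          binomz (int n + (int j - int l) * int M + int M - 1 - int B - int i) n)"
proof -
  define t where "t = int j * int M - 1 - int B - int i"
  define g where "g l = binomz (t + int M - int l * int M + int n) n" for l
  have upper: "int (sum_le_count n M (t + int M)) = (\<Sum>l=0..n. (-1)^l * int (n choose l) * g l)"
    unfolding sum_le_count_formula g_def by (simp add: algebra_simps)
  have lower: "int (sum_le_count n M t) = (\<Sum>l=0..n. (-1)^l * int (n choose l) * g (Suc l))"
    unfolding sum_le_count_formula g_def by (simp add: algebra_simps)
  have "int (carry_count n M B i j) = (\<Sum>l=0..n. (-1)^l * int (n choose l) * (g l - g (Suc l)))"
    unfolding carry_count_as_difference[OF assms] upper lower t_def[symmetric]
    by (simp add: sum_subtractf right_diff_distrib)
  also have "\<dots> = (\<Sum>l=0..Suc n. (-1)^l * int (Suc n choose l) * g l)"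
    by (rule alternating_binomial_telescope)
  finally show ?thesis
    by (simp add: g_def t_def algebra_simps)
qed

(* The closed form for an odd base M with the centred shift (M-1)/2, the shape shared
   by the one-step chain (M = 2b+1) and the r-step chain (M = (2b+1)^r). *)
lemma carry_count_centered_formula:
  assumes "odd M"
  shows "real (carry_count n M ((M - 1) div 2) i j)
     = (\<Sum>l=0..n+1. (-1)^l * real (n+1 choose l) *
          of_int (binomz (int n + (int j - int l) * int M + (int M - 1) div 2 - int i) n))"
proof -
  obtain q where q: "M = 2 * q + 1"
    using assms by (elim oddE)
  have half: "int M - 1 - int ((M - 1) div 2) = (int M - 1) div 2"
    unfolding q by simp
  have centered_arg: "int n + (int j - int l) * int M + int M - 1 - int ((M - 1) div 2) - int i
      = int n + (int j - int l) * int M + (int M - 1) div 2 - int i" for l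
    using half by linarith
  have "real (carry_count n M ((M - 1) div 2) i j) = of_int (int (carry_count n M ((M - 1) div 2) i j))"
    by simp
  also have "\<dots> = of_int (\<Sum>l=0..Suc n. (-1)^l * int (Suc n choose l) *
          binomz (int n + (int j - int l) * int M + (int M - 1) div 2 - int i) n)"
    unfolding carry_count_formula[OF odd_pos[OF assms]] centered_arg ..
  finally show ?thesis
    by simp
qed

definition digit_join :: "nat \<Rightarrow> nat \<Rightarrow> (nat \<Rightarrow> nat) \<times> (nat \<Rightarrow> nat) \<Rightarrow> nat \<Rightarrow> nat" where
  "digit_join n M = (\<lambda>(x, y). \<lambda>k\<in>{..<n}. x k + M * y k)"

lemma sum_digit_join: "(\<Sum>k<n. digit_join n M (x, y) k) = (\<Sum>k<n. x k) + M * (\<Sum>k<n. y k)"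
  by (simp add: digit_join_def sum.distrib sum_distrib_left)

(* Every base-(M*m) digit is uniquely x + M*y with x < M and y < m. *)
lemma digit_join_bij:
  assumes "M > 0"
  shows "bij_betw (digit_join n M) (digit_vectors n M \<times> digit_vectors n m) (digit_vectors n (M * m))"
proof -
  define split where "split z = (\<lambda>k\<in>{..<n}. z k mod M, \<lambda>k\<in>{..<n}. z k div M)" for z :: "nat \<Rightarrow> nat"
  have split_join: "split (digit_join n M (x, y)) = (x, y)"
    if x: "x \<in> digit_vectors n M" and y: "y \<in> digit_vectors n m" for x y
  proof -
    have "(x k + M * y k) mod M = x k" "(x k + M * y k) div M = y k" if "k < n" for k
      using PiE_mem[OF x, of k] that assms by simp_all
    then show ?thesis
      using PiE_arb[OF x] PiE_arb[OF y] by (auto simp: split_def digit_join_def)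
  qed
  have join_split: "digit_join n M (split z) = z" if z: "z \<in> digit_vectors n (M * m)" for z
    using PiE_arb[OF z] by (auto simp: split_def digit_join_def)
  have join_maps: "digit_join n M (x, y) \<in> digit_vectors n (M * m)"
    if x: "x \<in> digit_vectors n M" and y: "y \<in> digit_vectors n m" for x y
  proof -
    have "x k + M * y k < M * m" if "k < n" for k
    proof -
      have "x k < M" "Suc (y k) \<le> m"
        using PiE_mem[OF x, of k] PiE_mem[OF y, of k] that by simp_all
      then have "x k + M * y k < M * Suc (y k)"
        by simp
      also have "\<dots> \<le> M * m"
        using \<open>Suc (y k) \<le> m\<close> by (rule mult_le_mono2)
      finally show ?thesis .
    qed
    then show ?thesis by (simp add: digit_join_def)
  qed
  have split_maps: "split z \<in> digit_vectors n M \<times> digit_vectors n m"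
    if z: "z \<in> digit_vectors n (M * m)" for z
  proof -
    have "z k mod M < M" "z k div M < m" if "k < n" for k
      using PiE_mem[OF z, of k] that assms by (simp_all add: less_mult_imp_div_less mult.commute)
    then show ?thesis by (simp add: split_def)
  qed
  show ?thesis
  proof (rule bij_betw_byWitness[where f' = split])
    show "\<forall>p \<in> digit_vectors n M \<times> digit_vectors n m. split (digit_join n M p) = p"
      using split_join by blast
    show "\<forall>z \<in> digit_vectors n (M * m). digit_join n M (split z) = z"
      using join_split by blast
    show "digit_join n M ` (digit_vectors n M \<times> digit_vectors n m) \<subseteq> digit_vectors n (M * m)"
      using join_maps by blast
    show "split ` digit_vectors n (M * m) \<subseteq> digit_vectors n M \<times> digit_vectors n m"
      using split_maps by blast
  qed
qed

(* With shift B < M, the carries never leave {0..n}; this makes the intermediate carry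
   range over the state space of the chain. *)
lemma carry_le:
  assumes "B < M" and "i \<le> n" and x: "x \<in> digit_vectors n M"
  shows "(i + B + (\<Sum>k<n. x k)) div M \<le> n"
proof -
  obtain M' where M': "M = Suc M'"
    using assms(1) by (cases M) auto
  have "(\<Sum>k<n. x k) \<le> (\<Sum>k<n. M')"
    using PiE_mem[OF x] M' by (intro sum_mono) fastforce
  then have "i + B + (\<Sum>k<n. x k) < Suc n * M"
    using assms(1,2) unfolding M' by simp
  then show ?thesis
    using assms(1) by (simp add: less_Suc_eq_le[symmetric] div_less_iff_less_mult)
qed

lemma div_add_mult_two_stage:
  fixes a s M m :: nat
  assumes "M > 0"
  shows "(a + M * s) div (M * m) = (a div M + s) div m"
  using assms by (simp add: div_mult2_eq add.commute)

lemma carry_count_compose: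
  fixes n M m B c i j :: nat
  assumes B: "B < M" and i: "i \<le> n"
  shows "carry_count n (M * m) (B + M * c) i j
       = (\<Sum>k=0..n. carry_count n M B i k * carry_count n m c k j)"
proof -
  let ?A = "digit_vectors n M" and ?C = "digit_vectors n m"
  define carry where "carry x = (i + B + (\<Sum>k<n. x k)) div M" for x
  have M: "M > 0" using B by simp
  have two_stage: "(i + (B + M * c) + (\<Sum>k<n. digit_join n M (x, y) k)) div (M * m)
      = (carry x + c + (\<Sum>k<n. y k)) div m" for x y
  proof -
    have digits: "i + (B + M * c) + (\<Sum>k<n. digit_join n M (x, y) k)
        = (i + B + (\<Sum>k<n. x k)) + M * (c + (\<Sum>k<n. y k))"
      by (simp add: sum_digit_join algebra_simps)
    have "(i + (B + M * c) + (\<Sum>k<n. digit_join n M (x, y) k)) div (M * m)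
        = (carry x + (c + (\<Sum>k<n. y k))) div m"
      unfolding digits carry_def by (rule div_add_mult_two_stage[OF M])
    then show ?thesis
      by (simp only: add.assoc)
  qed
  have "carry_count n (M * m) (B + M * c) i j
      = card {p \<in> ?A \<times> ?C. (i + (B + M * c) + (\<Sum>k<n. digit_join n M p k)) div (M * m) = j}"
    unfolding carry_count_def by (rule card_filter_bij_betw[OF digit_join_bij[OF M]])
  also have "\<dots> = card (SIGMA x:?A. {y \<in> ?C. (carry x + c + (\<Sum>k<n. y k)) div m = j})"
    (is "card ?L = card ?R")
  proof (rule arg_cong[where f = card], rule set_eqI)
    fix p :: "(nat \<Rightarrow> nat) \<times> (nat \<Rightarrow> nat)"
    obtain x y where p: "p = (x, y)" by (cases p)
    show "p \<in> ?L \<longleftrightarrow> p \<in> ?R"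
      unfolding p by (simp only: two_stage mem_Collect_eq mem_Sigma_iff mem_Times_iff fst_conv snd_conv) blast
  qed
  also have "\<dots> = (\<Sum>x\<in>?A. carry_count n m c (carry x) j)"
    by (simp add: carry_count_def finite_PiE)
  also have "\<dots> = (\<Sum>k=0..n. \<Sum>x\<in>{x \<in> ?A. carry x = k}. carry_count n m c (carry x) j)"
    using carry_le[OF B i] by (intro sum.group[symmetric]) (auto simp: finite_PiE carry_def)
  also have "\<dots> = (\<Sum>k=0..n. carry_count n M B i k * carry_count n m c k j)"
    by (intro sum.cong refl) (simp add: carry_count_def carry_def)
  finally show ?thesis .
qed

lemma carriesB_P_eq_carry_count:
  "carriesB_P b n i j = real (carry_count n (2 * b + 1) b i j) / real ((2 * b + 1) ^ n)"
proof -
  have "{0..2 * b} = {0..<2 * b + 1}" by auto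
  then show ?thesis by (simp add: carriesB_P_def carry_count_def)
qed

(* In base 1 every digit is 0, so the carry does not move: the identity matrix. *)
lemma carry_count_unary: "carry_count n 1 0 i j = (if i = j then 1 else 0)"
proof -
  have zero_sum: "(\<Sum>k<n. x k) = 0" if "x \<in> digit_vectors n 1" for x
    using PiE_mem[OF that] by (intro sum.neutral) simp
  have "{x \<in> digit_vectors n 1. (i + 0 + (\<Sum>k<n. x k)) div 1 = j} = {x \<in> digit_vectors n 1. i = j}"
    using zero_sum by auto
  moreover have "card (digit_vectors n 1) = 1"
    by (simp add: card_PiE)
  ultimately show ?thesis
    by (simp add: carry_count_def)
qed

(* The centred shift of the base M*(2b+1) is that of M plus M*b, which is exactly the
   shift produced by composing with one more step of the chain. *)
lemma centered_offset_mult: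
  fixes M b :: nat
  assumes "odd M"
  shows "(M - 1) div 2 + M * b = (M * (2 * b + 1) - 1) div 2"
  using assms by (elim oddE) (simp add: algebra_simps)

lemma carriesB_Pr_eq_carry_count:
  assumes "i \<le> n"
  shows "carriesB_Pr b n r i j
     = real (carry_count n ((2 * b + 1) ^ r) (((2 * b + 1) ^ r - 1) div 2) i j)
       / real ((2 * b + 1) ^ (r * n))"
proof (induction r arbitrary: j)
  case 0
  then show ?case using carry_count_unary[of n i j] by simp
next
  case (Suc r)
  let ?m = "2 * b + 1" and ?M = "(2 * b + 1) ^ r"
  have half_lt: "(?M - 1) div 2 < ?M"
    by (simp add: le_less_trans[OF div_le_dividend])
  have half_Suc: "(?M - 1) div 2 + ?M * b = (?M * ?m - 1) div 2"
    by (rule centered_offset_mult) simp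
  have "carriesB_Pr b n (Suc r) i j
      = (\<Sum>k=0..n. real (carry_count n ?M ((?M - 1) div 2) i k * carry_count n ?m b k j))
        / (real (?M ^ n) * real (?m ^ n))"
    by (simp add: Suc carriesB_P_eq_carry_count sum_divide_distrib power_mult)
  also have "\<dots> = real (carry_count n (?M * ?m) ((?M * ?m - 1) div 2) i j) / real (?m ^ (Suc r * n))"
  proof -
    have "?M ^ n * ?m ^ n = ?m ^ (Suc r * n)"
      by (simp only: power_mult[symmetric] power_add[symmetric] mult_Suc add.commute)
    then show ?thesis
      unfolding carry_count_compose[OF half_lt assms, symmetric] half_Suc of_nat_sum[symmetric]
      by (metis of_nat_mult)
  qed
  finally show ?case
    by (simp add: mult.commute)
qed

lemma carriesB_P_formula:
  "carriesB_P b n i j =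
     (1 / real ((2*b+1)^n)) *
     (\<Sum>l=0..n+1. (-1)^l * real (n+1 choose l) *
        of_int (binomz (int n + (int j - int l) * (2*int b+1) + int b - int i) n))"
proof -
  have base: "int (2 * b + 1) = 2 * int b + 1" and half: "(2 * b + 1 - 1) div 2 = b"
    and int_half: "(2 * int b + 1 - 1) div 2 = int b"
    by simp_all
  have "odd (2 * b + 1)" by simp
  from carry_count_centered_formula[OF this, of n i j]
  have "real (carry_count n (2 * b + 1) b i j) =
     (\<Sum>l=0..n+1. (-1)^l * real (n+1 choose l) *
        of_int (binomz (int n + (int j - int l) * (2*int b+1) + int b - int i) n))"
    unfolding base half int_half .
  then show ?thesis
    unfolding carriesB_P_eq_carry_count by simp
qed

lemma carriesB_Pr_formula:
  assumes "i \<le> n"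
  shows "carriesB_Pr b n r i j =
     (1 / real ((2*b+1)^(r*n))) *
     (\<Sum>l=0..n+1. (-1)^l * real (n+1 choose l) *
        of_int (binomz (int n + (int j - int l) * (2*int b+1)^r
                        + ((2*int b+1)^r - 1) div 2 - int i) n))"
proof -
  have base: "int ((2 * b + 1) ^ r) = (2 * int b + 1) ^ r"
    by (simp add: add.commute)
  have "odd ((2 * b + 1) ^ r)" by simp
  from carry_count_centered_formula[OF this, of n i j]
  have "real (carry_count n ((2 * b + 1) ^ r) (((2 * b + 1) ^ r - 1) div 2) i j) =
     (\<Sum>l=0..n+1. (-1)^l * real (n+1 choose l) *
        of_int (binomz (int n + (int j - int l) * (2*int b+1)^r
                        + ((2*int b+1)^r - 1) div 2 - int i) n))"
    unfolding base .
  then show ?thesis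
    unfolding carriesB_Pr_eq_carry_count[OF assms] by simp
qed

theorem theorem4p2:
  fixes n b i j :: nat
  assumes "n \<ge> 1" and "b \<ge> 1" and "i \<le> n" and "j \<le> n"
  shows "(carriesB_P b n i j =
           (1 / real ((2*b+1)^n)) *
           (\<Sum>l=0..n+1. (-1)^l * real (n+1 choose l) *
              of_int (binomz (int n + (int j - int l) * (2*int b+1) + int b - int i) n)))
       \<and> (\<forall>r\<ge>1. carriesB_Pr b n r i j =
           (1 / real ((2*b+1)^(r*n))) *
           (\<Sum>l=0..n+1. (-1)^l * real (n+1 choose l) *
              of_int (binomz (int n + (int j - int l) * (2*int b+1)^r
                              + ((2*int b+1)^r - 1) div 2 - int i) n)))"
  using carriesB_P_formula carriesB_Pr_formula[OF assms(3)] by blast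

end
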